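(* For nonzero complex parameters $g,a$ let $T(g,a)$ be the infinite matrix indexed by $i,j\in\mathbb{Z}_{\ge 0}$ with entries $$T(g,a)_{i,j}=(ag)^{i+j}\sum_{k=0}^{\min(i,j)}\binom{i}{k}\binom{j}{k}a^{-2k}.$$ Let $(g,a)$ and $(g',a')$ be two such parameter pairs, with $|g|,|g'|$ small enough that the matrix products $T(g,a)T(g',a')$ and $T(g',a')T(g,a)$ (defined by $(XY)_{i,j}=\sum_{k\ge0}X_{i,k}Y_{k,j}$) converge absolutely entrywise. Then $T(g,a)$ and $T(g',a')$ commute if and only if $\varphi(g,a)=\varphi(g',a')$, where $$\varphi(g,a)=\frac{1-g^2(1-a^2)}{a g}.$$
   Context: $T(g,a)$ is the transfer matrix of the model of 1+1-dimensional Lorentzian triangulations, with weight $g$ per triangle and weight $a$ per pair of consecutive triangles in a time slice pointing in the same direction; the indices $i,j$ count the up- and down-pointing triangles of a time slice. *)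

theory Defs
  imports Complex_Main
begin

definition T :: "complex \<Rightarrow> complex \<Rightarrow> nat \<Rightarrow> nat \<Rightarrow> complex" where
  "T g a i j = (a * g) ^ (i + j) *
     (\<Sum>k = 0..min i j. of_nat (i choose k) * of_nat (j choose k) * inverse (a ^ (2 * k)))"

definition matprod :: "(nat \<Rightarrow> nat \<Rightarrow> complex) \<Rightarrow> (nat \<Rightarrow> nat \<Rightarrow> complex) \<Rightarrow> nat \<Rightarrow> nat \<Rightarrow> complex" where
  "matprod X Y i j = (\<Sum>k. X i k * Y k j)"

definition phi :: "complex \<Rightarrow> complex \<Rightarrow> complex" where
  "phi g a = (1 - g^2 * (1 - a^2)) / (a * g)"

end

theory Submission
  imports Defs
begin

text \<open>With \<open>u = a g\<close> and \<open>c = g\<^sup>2 (1 - a\<^sup>2)\<close>, the matrix \<open>T(g,a)\<close> is the array with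
  \<open>T(i,0) = T(0,i) = u\<^sup>i\<close> obeying the Pascal-type recurrence
  \<open>T(i+1,k+1) = u T(i,k+1) + u T(i+1,k) + c T(i,k)\<close>.
  For two such arrays \<open>X\<close> (parameters \<open>u, c\<close>) and \<open>Y\<close> (parameters \<open>v, d\<close>), the recurrences
  express \<open>x(k+1)\<close> through the same four products as \<open>x(k)\<close>, where
  \<open>x(k) = (X(i,k) - u X(i-1,k)) (Y(k,j) - v Y(k,j-1))\<close>; telescoping \<open>\<Sum>\<^sub>k (x(k+1) - x(k)) = -x(0)\<close>
  then shows that \<open>M = XY\<close> satisfies
  \<open>(1 - uv) M(i,j) = (v + ud) M(i,j-1) + (u + cv) M(i-1,j) - (uv - cd) M(i-1,j-1) + [i = j = 0]\<close>,
  which determines \<open>M\<close> (the case \<open>i = j = 0\<close> forces \<open>uv \<noteq> 1\<close>). Swapping the factors exchanges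
  \<open>v + ud\<close> and \<open>u + cv\<close> and fixes \<open>uv - cd\<close>, so the matrices commute iff \<open>u + cv = v + du\<close>,
  which is \<open>\<phi>(g,a) = \<phi>(g',a')\<close> after clearing denominators.\<close>

definition transfer_recurrence :: "complex \<Rightarrow> complex \<Rightarrow> (nat \<Rightarrow> nat \<Rightarrow> complex) \<Rightarrow> bool" where
  "transfer_recurrence u c X \<longleftrightarrow>
     X 0 0 = 1 \<and> (\<forall>i. X (Suc i) 0 = u * X i 0) \<and> (\<forall>k. X 0 (Suc k) = u * X 0 k) \<and>
     (\<forall>i k. X (Suc i) (Suc k) = u * X i (Suc k) + u * X (Suc i) k + c * X i k)"

definition binom_pair_sum :: "complex \<Rightarrow> nat \<Rightarrow> nat \<Rightarrow> nat \<Rightarrow> complex" where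
  "binom_pair_sum w n i k = (\<Sum>m\<le>n. of_nat (i choose m) * of_nat (k choose m) * w ^ m)"

lemma T_eq_binom_pair_sum:
  assumes "min i k \<le> n"
  shows "T g a i k = (a * g) ^ (i + k) * binom_pair_sum (inverse (a\<^sup>2)) n i k"
proof -
  have "(\<Sum>m = 0..min i k. of_nat (i choose m) * of_nat (k choose m) * inverse (a ^ (2 * m)))
      = (\<Sum>m\<le>n. of_nat (i choose m) * of_nat (k choose m) * inverse (a ^ (2 * m)))"
    by (rule sum.mono_neutral_left) (use assms in auto)
  also have "\<dots> = binom_pair_sum (inverse (a\<^sup>2)) n i k"
    unfolding binom_pair_sum_def by (simp add: power_inverse power_mult)
  finally show ?thesis unfolding T_def by simp
qed

lemma binom_pair_sum_Suc_eq:
  assumes "min i k \<le> n"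
  shows "binom_pair_sum w (Suc n) i k = binom_pair_sum w n i k"
  using assms unfolding binom_pair_sum_def by (auto simp: min_le_iff_disj)

text \<open>Pascal's rule in both arguments turns the mixed second difference into a shift of \<open>m\<close>.\<close>
lemma binom_pair_sum_second_difference:
  "binom_pair_sum w (Suc n) (Suc i) (Suc k) - binom_pair_sum w (Suc n) i (Suc k)
     - binom_pair_sum w (Suc n) (Suc i) k + binom_pair_sum w (Suc n) i k
   = w * binom_pair_sum w n i k"
proof -
  have "binom_pair_sum w (Suc n) (Suc i) (Suc k) - binom_pair_sum w (Suc n) i (Suc k)
          - binom_pair_sum w (Suc n) (Suc i) k + binom_pair_sum w (Suc n) i k
     = (\<Sum>m\<le>Suc n. (of_nat (Suc i choose m) - of_nat (i choose m)) *
           (of_nat (Suc k choose m) - of_nat (k choose m)) * w ^ m)"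
    unfolding binom_pair_sum_def
    by (simp add: sum_subtractf[symmetric] sum.distrib[symmetric] algebra_simps)
  also have "\<dots> = (\<Sum>m\<le>n. of_nat (i choose m) * of_nat (k choose m) * w ^ Suc m)"
    by (subst sum.atMost_Suc_shift) simp
  also have "\<dots> = w * binom_pair_sum w n i k"
    by (simp add: binom_pair_sum_def sum_distrib_left mult_ac)
  finally show ?thesis .
qed

lemma T_Suc_Suc:
  assumes "a \<noteq> 0"
  shows "T g a (Suc i) (Suc k)
       = a * g * T g a i (Suc k) + a * g * T g a (Suc i) k + g\<^sup>2 * (1 - a\<^sup>2) * T g a i k"
proof -
  define w where "w = inverse (a\<^sup>2)"
  define n where "n = i + k + 1"
  have "min i k \<le> n" "min i (Suc k) \<le> Suc n" "min (Suc i) k \<le> Suc n"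
    "min (Suc i) (Suc k) \<le> Suc n"
    by (simp_all add: n_def)
  note T_S = this[THEN T_eq_binom_pair_sum[where g = g and a = a], folded w_def]
  have c: "g\<^sup>2 * (1 - a\<^sup>2) = (a * g)\<^sup>2 * (w - 1)"
    using assms by (simp add: w_def field_simps power2_eq_square)
  have second_difference: "binom_pair_sum w (Suc n) (Suc i) (Suc k)
      = binom_pair_sum w (Suc n) i (Suc k) + binom_pair_sum w (Suc n) (Suc i) k
        - binom_pair_sum w (Suc n) i k + w * binom_pair_sum w n i k"
    using binom_pair_sum_second_difference[of w n i k] by (simp add: algebra_simps)
  have truncation: "binom_pair_sum w (Suc n) i k = binom_pair_sum w n i k"
    by (rule binom_pair_sum_Suc_eq) (simp add: n_def)
  show ?thesis
    unfolding T_S c second_difference truncation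
    by (simp add: algebra_simps power_add power2_eq_square)
qed

lemma T_transfer_recurrence:
  assumes "a \<noteq> 0"
  shows "transfer_recurrence (a * g) (g\<^sup>2 * (1 - a\<^sup>2)) (T g a)"
  unfolding transfer_recurrence_def using T_Suc_Suc[OF assms] by (simp add: T_def)

lemma matprod_recurrence:
  fixes X Y :: "nat \<Rightarrow> nat \<Rightarrow> complex"
  assumes X: "transfer_recurrence u c X" and Y: "transfer_recurrence v d Y"
    and summable: "\<And>i j. summable (\<lambda>k. X i k * Y k j)"
  shows "(1 - u * v) * matprod X Y i j =
      (v + u * d) * (if j = 0 then 0 else matprod X Y i (j - 1))
    + (u + c * v) * (if i = 0 then 0 else matprod X Y (i - 1) j)
    - (u * v - c * d) * (if i = 0 \<or> j = 0 then 0 else matprod X Y (i - 1) (j - 1))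
    + (if i = 0 \<and> j = 0 then 1 else 0)"
proof -
  define M where "M = matprod X Y"
  define Xp where "Xp k = (if i = 0 then 0 else X (i - 1) k)" for k
  define Yp where "Yp k = (if j = 0 then 0 else Y k (j - 1))" for k
  define M1 where "M1 = (if i = 0 then 0 else M (i - 1) j)"
  define M2 where "M2 = (if j = 0 then 0 else M i (j - 1))"
  define M12 where "M12 = (if i = 0 \<or> j = 0 then 0 else M (i - 1) (j - 1))"
  have s0: "(\<lambda>k. X i k * Y k j) sums M i j"
    using summable by (simp add: M_def matprod_def summable_sums)
  have s1: "(\<lambda>k. Xp k * Y k j) sums M1"
    using summable by (auto simp: Xp_def M1_def M_def matprod_def summable_sums)
  have s2: "(\<lambda>k. X i k * Yp k) sums M2"
    using summable by (auto simp: Yp_def M2_def M_def matprod_def summable_sums)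
  have s12: "(\<lambda>k. Xp k * Yp k) sums M12"
    using summable by (auto simp: Xp_def Yp_def M12_def M_def matprod_def summable_sums)
  define x where "x k = (X i k - u * Xp k) * (Y k j - v * Yp k)" for k
  have "x = (\<lambda>k. X i k * Y k j - v * (X i k * Yp k) - u * (Xp k * Y k j) + (u * v) * (Xp k * Yp k))"
    by (auto simp: x_def fun_eq_iff algebra_simps)
  then have sums_x: "x sums (M i j - v * M2 - u * M1 + (u * v) * M12)"
    by (simp only:) (intro sums_add sums_diff sums_mult s0 s1 s2 s12)
  have X_step: "X i (Suc k) - u * Xp (Suc k) = u * X i k + c * Xp k" for k
    using X by (cases i) (auto simp: Xp_def transfer_recurrence_def)
  have Y_step: "Y (Suc k) j - v * Yp (Suc k) = v * Y k j + d * Yp k" for k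
    using Y by (cases j) (auto simp: Yp_def transfer_recurrence_def)
  have "(\<lambda>k. x (Suc k)) = (\<lambda>k. (u * v) * (X i k * Y k j) + (u * d) * (X i k * Yp k)
          + (c * v) * (Xp k * Y k j) + (c * d) * (Xp k * Yp k))"
    unfolding x_def X_step Y_step by (auto simp: fun_eq_iff algebra_simps)
  then have sums_x_Suc:
    "(\<lambda>k. x (Suc k)) sums ((u * v) * M i j + (u * d) * M2 + (c * v) * M1 + (c * d) * M12)"
    by (simp only:) (intro sums_add sums_mult s0 s1 s2 s12)
  have x0: "x 0 = (if i = 0 \<and> j = 0 then 1 else 0)"
    using X Y by (cases i; cases j) (auto simp: x_def Xp_def Yp_def transfer_recurrence_def)
  have "(\<lambda>k. x (Suc k) - x k) sums (0 - x 0)"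
    using summable_LIMSEQ_zero[OF sums_summable[OF sums_x]] by (rule telescope_sums)
  with sums_diff[OF sums_x_Suc sums_x]
  have "(u * v) * M i j + (u * d) * M2 + (c * v) * M1 + (c * d) * M12
          - (M i j - v * M2 - u * M1 + (u * v) * M12) = 0 - x 0"
    by (rule sums_unique2)
  then show ?thesis
    unfolding x0 M1_def M2_def M12_def M_def[symmetric] by algebra
qed

lemma matrix_recurrence_unique:
  fixes M N :: "nat \<Rightarrow> nat \<Rightarrow> complex"
  assumes "e \<noteq> 0"
    and rec_M: "\<And>i j. e * M i j = \<alpha> * (if j = 0 then 0 else M i (j - 1))
        + \<beta> * (if i = 0 then 0 else M (i - 1) j)
        - \<gamma> * (if i = 0 \<or> j = 0 then 0 else M (i - 1) (j - 1)) + \<delta> i j"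
    and rec_N: "\<And>i j. e * N i j = \<alpha> * (if j = 0 then 0 else N i (j - 1))
        + \<beta> * (if i = 0 then 0 else N (i - 1) j)
        - \<gamma> * (if i = 0 \<or> j = 0 then 0 else N (i - 1) (j - 1)) + \<delta> i j"
  shows "M = N"
proof -
  have "M i j = N i j" for i j
  proof (induction "i + j" arbitrary: i j rule: less_induct)
    case less
    have "e * M i j = e * N i j"
      unfolding rec_M rec_N using less by simp
    with \<open>e \<noteq> 0\<close> show ?case by simp
  qed
  then show ?thesis by blast
qed

lemma phi_eq_iff:
  assumes "g \<noteq> 0" "a \<noteq> 0" "g' \<noteq> 0" "a' \<noteq> 0"
  shows "phi g a = phi g' a' \<longleftrightarrow>
    a * g + g\<^sup>2 * (1 - a\<^sup>2) * (a' * g') = a' * g' + g'\<^sup>2 * (1 - a'\<^sup>2) * (a * g)"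
  using assms unfolding phi_def by (simp add: frac_eq_eq) algebra

theorem mainTheorem1:
  fixes g a g' a' :: complex
  assumes "g \<noteq> 0" and "a \<noteq> 0" and "g' \<noteq> 0" and "a' \<noteq> 0"
    and "\<forall>i j. summable (\<lambda>k. norm (T g a i k * T g' a' k j))"
    and "\<forall>i j. summable (\<lambda>k. norm (T g' a' i k * T g a k j))"
  shows "matprod (T g a) (T g' a') = matprod (T g' a') (T g a) \<longleftrightarrow> phi g a = phi g' a'"
proof -
  define u v c d where "u = a * g" and "v = a' * g'"
    and "c = g\<^sup>2 * (1 - a\<^sup>2)" and "d = g'\<^sup>2 * (1 - a'\<^sup>2)"
  define M M' where "M = matprod (T g a) (T g' a')" and "M' = matprod (T g' a') (T g a)"
  note rec = matprod_recurrence[OF T_transfer_recurrence[OF \<open>a \<noteq> 0\<close>]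
      T_transfer_recurrence[OF \<open>a' \<noteq> 0\<close>] summable_norm_cancel]
    matprod_recurrence[OF T_transfer_recurrence[OF \<open>a' \<noteq> 0\<close>]
      T_transfer_recurrence[OF \<open>a \<noteq> 0\<close>] summable_norm_cancel]
  note rec_M = rec(1)[OF assms(5)[rule_format], folded M_def u_def v_def c_def d_def]
  note rec_M' = rec(2)[OF assms(6)[rule_format], folded M'_def u_def v_def c_def d_def]
  have "(1 - u * v) * M 0 0 = 1" using rec_M[of 0 0] by simp
  then have "1 - u * v \<noteq> 0" and "M 0 0 \<noteq> 0" by auto
  have "M = M' \<longleftrightarrow> u + c * v = v + d * u"
  proof
    assume "M = M'"
    then have "(u + c * v) * M 0 0 = (v + d * u) * M 0 0"
      using rec_M[of 1 0] rec_M'[of 1 0] by (simp add: mult.commute)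
    with \<open>M 0 0 \<noteq> 0\<close> show "u + c * v = v + d * u" by simp
  next
    assume "u + c * v = v + d * u"
    then show "M = M'"
      using matrix_recurrence_unique[OF \<open>1 - u * v \<noteq> 0\<close> rec_M] rec_M'
      by (simp add: mult.commute)
  qed
  then show ?thesis
    using phi_eq_iff[OF assms(1-4)] by (simp add: M_def M'_def u_def v_def c_def d_def)
qed

end
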